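(* Let $\lambda>0$. For every real $z>2$, $$\int_{-2}^{2}\frac{(4-x^2)^{\lambda-1/2}}{(z-x)^{\lambda}}\,dx \;=\; C_\lambda\,\big[G(z)\big]^{\lambda} \;=\; C_\lambda\left[\int_{-2}^{2}\frac{1}{z-x}\,\frac{\sqrt{4-x^2}}{2\pi}\,dx\right]^{\lambda} \;=\; C_\lambda\,\exp\left(-\lambda\int_{-2}^{2}\log(z-x)\,\frac{dx}{\pi\sqrt{4-x^2}}\right),$$ where $C_\lambda=\int_{-2}^{2}(4-x^2)^{\lambda-1/2}\,dx$.
   Context: $G$ denotes the Cauchy–Stieltjes transform of the standard Wigner (semicircle) law: $G(z)=\int_{-2}^2\frac{1}{z-x}\frac{\sqrt{4-x^2}}{2\pi}dx=\frac{z-\sqrt{z^2-4}}{2}$ for $z\in\mathbb{C}\setminus[-2,2]$ (branch with $G(z)\sim 1/z$ at infinity); for real $z>2$, $G(z)\in(0,1)$. Real powers and logarithms of positive reals are the usual real ones. *)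

theory Defs
  imports "HOL-Analysis.Analysis"
begin

text \<open>Closed form of the Cauchy-Stieltjes transform of the semicircle law,
  for real z > 2 (branch with G(z) ~ 1/z at infinity).\<close>
definition G :: "real \<Rightarrow> real" where
  "G z = (z - sqrt (z^2 - 4)) / 2"

definition C :: "real \<Rightarrow> real" where
  "C lam = (LBINT x = -2..2. (4 - x^2) powr (lam - 1/2))"

end

theory Submission
  imports Defs
begin

(* Substitute x = -2 cos t, so that dx = 2 sin t dt, 4 - x^2 = (2 sin t)^2,
   and write z = g + 1/g with g = G z in (0, 1) (Joukowski map), so that
   z - x = (1 + 2 g cos t + g^2) / g.  All three integrals of the theorem then become
   integrals over [0, pi] of the kernel den g t = 1 + 2 g cos t + g^2:
     (1) the power integral is 2^(2 lam) g^lam Phi lam g, where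
         Phi lam g = integral of sin^(2 lam) t / den g t ^ lam, and C lam = 2^(2 lam) Phi lam 0;
     (2) the Stieltjes transform is (2/pi) g Phi 1 g;
     (3) the logarithmic integral is -ln g + (1/pi) * integral of ln (den g t).
   The heart of the proof is that Phi lam g does not depend on g in [0, 1), and that the
   integral of ln (den g t) vanishes.  Both are shown by differentiating under the integral
   sign: the relevant g-derivatives are exact t-derivatives of functions vanishing at 0 and
   pi (for Phi via an auxiliary integral Psi and a first-order ODE in g).
   The file first develops the general calculus tools, then the kernel den and the two
   constancy results, then the substitution, and finally assembles the theorem. *)

lemma has_real_derivative_parametric_integral:
  fixes F F' :: "real \<Rightarrow> real \<Rightarrow> real"
  assumes U: "open U" "convex U" "g \<in> U"
    and deriv: "\<And>x t. x \<in> U \<Longrightarrow> t \<in> {a..b} \<Longrightarrow> ((\<lambda>x. F x t) has_real_derivative F' x t) (at x)"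
    and int: "\<And>x. x \<in> U \<Longrightarrow> F x integrable_on {a..b}"
    and cont: "continuous_on (U \<times> {a..b}) (\<lambda>(x, t). F' x t)"
  shows "((\<lambda>x. integral {a..b} (F x)) has_real_derivative integral {a..b} (F' g)) (at g)"
proof -
  have "((\<lambda>x. integral (cbox a b) (F x)) has_field_derivative integral (cbox a b) (F' g)) (at g within U)"
  proof (rule leibniz_rule_field_derivative)
    show "((\<lambda>x. F x t) has_field_derivative F' x t) (at x within U)" if "x \<in> U" "t \<in> cbox a b" for x t
      using deriv[of x t] that by (simp add: has_field_derivative_at_within)
  qed (use int cont U in simp_all)
  then show ?thesis by (simp only: at_within_open[OF U(3) U(1)] cbox_interval)
qed

lemma integral_zero_by_antiderivative:
  fixes Q h :: "real \<Rightarrow> real"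
  assumes "a \<le> b" "continuous_on {a..b} Q" "Q a = Q b"
    and "\<And>t. a < t \<Longrightarrow> t < b \<Longrightarrow> (Q has_real_derivative h t) (at t)"
  shows "integral {a..b} h = 0"
proof -
  have "(h has_integral (Q b - Q a)) {a..b}"
    using assms by (intro fundamental_theorem_of_calculus_interior)
      (auto simp: has_real_derivative_iff_has_vector_derivative[symmetric])
  with assms(3) show ?thesis by (simp add: integral_unique)
qed

lemma parametric_integral_constant:
  fixes F F' :: "real \<Rightarrow> real \<Rightarrow> real"
  assumes "open U" "convex U" "{c..d} \<subseteq> U" "c \<le> d"
    and "\<And>x t. x \<in> U \<Longrightarrow> t \<in> {a..b} \<Longrightarrow> ((\<lambda>x. F x t) has_real_derivative F' x t) (at x)"
    and "\<And>x. x \<in> U \<Longrightarrow> F x integrable_on {a..b}"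
    and "continuous_on (U \<times> {a..b}) (\<lambda>(x, t). F' x t)"
    and zero: "\<And>x. c < x \<Longrightarrow> x < d \<Longrightarrow> integral {a..b} (F' x) = 0"
  shows "integral {a..b} (F d) = integral {a..b} (F c)"
proof (cases "c = d")
  case False
  let ?I = "\<lambda>x. integral {a..b} (F x)"
  have D: "(?I has_real_derivative integral {a..b} (F' x)) (at x)" if "x \<in> {c..d}" for x
    using that assms by (intro has_real_derivative_parametric_integral) auto
  show ?thesis
  proof (rule DERIV_isconst2[where f = ?I])
    show "continuous_on {c..d} ?I"
      using D by (intro continuous_at_imp_continuous_on ballI DERIV_isCont) auto
    show "(?I has_real_derivative 0) (at x)" if "c < x" "x < d" for x
      using D[of x] zero[of x] that by simp
  qed (use False assms(4) in auto)
qed simp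

lemma powr_split_last: "0 < (y::real) \<Longrightarrow> y powr a = y powr (a - 1) * y"
  by (simp add: powr_diff)

text \<open>The kernel denominator 1 + 2 g cos t + g^2 = |1 + g exp(i t)|^2, positive for |g| < 1.\<close>
definition den :: "real \<Rightarrow> real \<Rightarrow> real" where
  "den g t = 1 + 2*g*cos t + g^2"

lemma den_pos:
  assumes "\<bar>g\<bar> < 1" shows "0 < den g t"
proof -
  have "\<bar>g * cos t\<bar> \<le> \<bar>g\<bar>"
    using abs_cos_le_one[of t] by (simp add: abs_mult mult_left_le)
  hence "(1 - \<bar>g\<bar>)^2 \<le> den g t"
    unfolding den_def by (simp add: power2_eq_square algebra_simps)
  moreover have "0 < (1 - \<bar>g\<bar>)^2" using assms by simp
  ultimately show ?thesis by linarith
qed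

lemma den_deriv_param: "((\<lambda>g. den g t) has_real_derivative 2*cos t + 2*g) (at g)"
  unfolding den_def by (auto intro!: derivative_eq_intros)

lemma den_deriv_angle: "((\<lambda>t. den g t) has_real_derivative -2*g* sin t) (at t)"
  unfolding den_def by (auto intro!: derivative_eq_intros)

lemma den_powr_deriv_param:
  assumes "\<bar>g\<bar> < 1"
  shows "((\<lambda>g. den g t powr r) has_real_derivative r * den g t powr (r - 1) * (2*cos t + 2*g)) (at g)"
  using DERIV_fun_powr[OF den_deriv_param den_pos[OF assms]] by simp

lemma continuous_on_den_powr:
  "continuous_on ({-1<..<1} \<times> T) (\<lambda>p. den (fst p) (snd p) powr r)"
proof -
  have "\<forall>p\<in>{-1<..<(1::real)} \<times> T. den (fst p) (snd p) \<noteq> 0"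
  proof
    fix p assume "p \<in> {-1<..<(1::real)} \<times> T"
    then have "\<bar>fst p\<bar> < 1" by auto
    then show "den (fst p) (snd p) \<noteq> 0" using den_pos[of "fst p" "snd p"] by simp
  qed
  then show ?thesis
    unfolding den_def by (intro continuous_on_powr continuous_intros) auto
qed

lemma continuous_on_den_powr_at:
  "\<bar>g\<bar> < 1 \<Longrightarrow> continuous_on T (\<lambda>t. den g t powr r)"
  using den_pos[of g] unfolding den_def
  by (intro continuous_on_powr continuous_intros) (auto simp: less_imp_neq dual_order.strict_implies_not_eq)

lemma continuous_on_sin_powr:
  "0 < p \<Longrightarrow> continuous_on {0..pi} (\<lambda>t. sin t powr p)"
  by (rule continuous_on_powr') (auto intro!: sin_ge_zero continuous_intros)

lemma continuous_on_sin_powr_snd: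
  "0 < p \<Longrightarrow> continuous_on ((S :: real set) \<times> {0..pi}) (\<lambda>q. sin (snd q) powr p)"
  by (rule continuous_on_powr') (auto intro!: sin_ge_zero continuous_intros)

text \<open>The integral Phi (the power integral after substitution) and an auxiliary
  integral Psi linked to it by a first-order ODE in g.\<close>
definition Phi :: "real \<Rightarrow> real \<Rightarrow> real" where
  "Phi lam g = integral {0..pi} (\<lambda>t. sin t powr (2*lam) * den g t powr (-lam))"

definition Psi :: "real \<Rightarrow> real \<Rightarrow> real" where
  "Psi lam g = integral {0..pi} (\<lambda>t. sin t powr (2*lam) * ((1 + g*cos t) * den g t powr (-lam-1)))"

definition Psi_dg :: "real \<Rightarrow> real \<Rightarrow> real \<Rightarrow> real" where
  "Psi_dg lam g t = sin t powr (2*lam) * (cos t * den g t powr (-lam-1)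
     + (1 + g*cos t) * ((-lam-1) * den g t powr (-lam-1-1) * (2*cos t + 2*g)))"

lemma Psi_dg_is_derivative:
  assumes "\<bar>g\<bar> < 1"
  shows "((\<lambda>g. sin t powr (2*lam) * ((1 + g*cos t) * den g t powr (-lam-1))) has_real_derivative
      Psi_dg lam g t) (at g)"
  unfolding Psi_dg_def using assms
  by (intro DERIV_cmult derivative_eq_intros den_powr_deriv_param) (auto intro!: den_deriv_param den_pos)

text \<open>The key identity: Psi_dg is an exact t-derivative, namely of
  -sin t ^ (2 lam + 1) / den g t ^ (lam + 1), a function vanishing at t = 0 and t = pi.\<close>
lemma Psi_dg_exact:
  assumes "\<bar>g\<bar> < 1" "0 < sin t"
  shows "((\<lambda>t. - (sin t powr (2*lam+1) * den g t powr (-lam-1))) has_real_derivative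
      Psi_dg lam g t) (at t)"
proof -
  have d: "0 < den g t" using den_pos[OF assms(1)] .
  have ds: "((\<lambda>t. sin t powr (2*lam+1)) has_real_derivative (2*lam+1) * sin t powr (2*lam) * cos t) (at t)"
    using DERIV_fun_powr[OF DERIV_sin assms(2), of "2*lam+1"] by simp
  have dd: "((\<lambda>t. den g t powr (-lam-1)) has_real_derivative
      (-lam-1) * den g t powr (-lam-1-1) * (-2*g* sin t)) (at t)"
    using DERIV_fun_powr[OF den_deriv_angle d, of "-lam-1"] by simp
  have "((\<lambda>t. - (sin t powr (2*lam+1) * den g t powr (-lam-1))) has_real_derivative
      - ((2*lam+1) * sin t powr (2*lam) * cos t * den g t powr (-lam-1)
        + sin t powr (2*lam+1) * ((-lam-1) * den g t powr (-lam-1-1) * (-2*g* sin t)))) (at t)"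
    by (rule DERIV_cong[OF DERIV_minus[OF DERIV_mult[OF ds dd]]]) (simp add: algebra_simps)
  moreover have "- ((2*lam+1) * sin t powr (2*lam) * cos t * den g t powr (-lam-1)
      + sin t powr (2*lam+1) * ((-lam-1) * den g t powr (-lam-1-1) * (-2*g* sin t))) = Psi_dg lam g t"
  proof -
    have s_shift: "sin t powr (2*lam+1) = sin t powr (2*lam) * sin t"
      using powr_split_last[OF assms(2), of "2*lam+1"] by simp
    have d_shift: "den g t powr (-lam-1) = den g t powr (-lam-1-1) * den g t"
      by (rule powr_split_last[OF d])
    have "sin t ^ 2 + cos t ^ 2 = 1" "den g t = 1 + 2*g*cos t + g^2"
      by (simp_all add: den_def)
    then show ?thesis
      unfolding Psi_dg_def s_shift d_shift by algebra
  qed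
  ultimately show ?thesis by simp
qed

lemma Psi_constant:
  assumes "0 < lam" "0 \<le> g" "g < 1"
  shows "Psi lam g = Psi lam 0"
  unfolding Psi_def
proof (rule parametric_integral_constant[where U = "{-1<..<1}" and F' = "Psi_dg lam"])
  fix x :: real assume "x \<in> {-1<..<1}"
  then show "(\<lambda>t. sin t powr (2*lam) * ((1 + x*cos t) * den x t powr (-lam-1))) integrable_on {0..pi}"
    using assms by (intro integrable_continuous_real continuous_on_mult continuous_on_sin_powr
        continuous_on_den_powr_at) (auto intro!: continuous_intros)
next
  have "continuous_on ({-1<..<1} \<times> {0..pi}) (\<lambda>q. sin (snd q) powr (2*lam) *
      (cos (snd q) * den (fst q) (snd q) powr (-lam-1) + (1 + fst q*cos (snd q)) *
       ((-lam-1) * den (fst q) (snd q) powr (-lam-1-1) * (2*cos (snd q) + 2*fst q))))"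
    using assms by (intro continuous_on_mult continuous_on_add continuous_on_sin_powr_snd
        continuous_on_den_powr continuous_on_const) (auto intro!: continuous_intros)
  then show "continuous_on ({-1<..<1} \<times> {0..pi}) (\<lambda>(x, t). Psi_dg lam x t)"
    by (simp add: split_beta' Psi_dg_def)
next
  fix x :: real assume x: "0 < x" "x < g"
  then have xa: "\<bar>x\<bar> < 1" using assms by simp
  show "integral {0..pi} (Psi_dg lam x) = 0"
  proof (rule integral_zero_by_antiderivative)
    show "continuous_on {0..pi} (\<lambda>t. - (sin t powr (2*lam+1) * den x t powr (-lam-1)))"
      using assms xa by (intro continuous_intros continuous_on_mult continuous_on_sin_powr
          continuous_on_den_powr_at) auto
    show "((\<lambda>t. - (sin t powr (2*lam+1) * den x t powr (-lam-1))) has_real_derivative Psi_dg lam x t) (at t)"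
      if "0 < t" "t < pi" for t
      using Psi_dg_exact[OF xa sin_gt_zero[OF that]] .
  qed (use assms in simp_all)
qed (use assms Psi_dg_is_derivative in auto)

definition Phi_deriv :: "real \<Rightarrow> real \<Rightarrow> real" where
  "Phi_deriv lam g = integral {0..pi} (\<lambda>t. sin t powr (2*lam) * (-lam * den g t powr (-lam-1) * (2*cos t + 2*g)))"

lemma Phi_has_derivative:
  assumes "0 < lam" "\<bar>g\<bar> < 1"
  shows "(Phi lam has_real_derivative Phi_deriv lam g) (at g)"
  unfolding Phi_def Phi_deriv_def
proof (rule has_real_derivative_parametric_integral[where U = "{-1<..<1}"])
  fix x t :: real assume "x \<in> {-1<..<1}"
  then have "\<bar>x\<bar> < 1" by auto
  from DERIV_cmult[OF den_powr_deriv_param[OF this, of t "-lam"], of "sin t powr (2*lam)"]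
  show "((\<lambda>x. sin t powr (2*lam) * den x t powr (-lam)) has_real_derivative
      sin t powr (2*lam) * (-lam * den x t powr (-lam-1) * (2*cos t + 2*x))) (at x)"
    by simp
next
  fix x :: real assume "x \<in> {-1<..<1}"
  then show "(\<lambda>t. sin t powr (2*lam) * den x t powr (-lam)) integrable_on {0..pi}"
    using assms by (intro integrable_continuous_real continuous_on_mult continuous_on_sin_powr
        continuous_on_den_powr_at) auto
next
  have "continuous_on ({-1<..<1} \<times> {0..pi}) (\<lambda>q. sin (snd q) powr (2*lam) *
      (-lam * den (fst q) (snd q) powr (-lam-1) * (2*cos (snd q) + 2*fst q)))"
    using assms by (intro continuous_on_mult continuous_on_sin_powr_snd continuous_on_den_powr
        continuous_on_const) (auto intro!: continuous_intros)
  then show "continuous_on ({-1<..<1} \<times> {0..pi})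
      (\<lambda>(x, t). sin t powr (2*lam) * (-lam * den x t powr (-lam-1) * (2*cos t + 2*x)))"
    by (simp add: split_beta')
qed (use assms in auto)

lemma Phi_ode:
  assumes "0 < lam" "\<bar>x\<bar> < 1"
  shows "x * Phi_deriv lam x + 2*lam * Phi lam x = 2*lam * Psi lam x"
proof -
  let ?A = "\<lambda>t. sin t powr (2*lam) * (-lam * den x t powr (-lam-1) * (2*cos t + 2*x))"
  let ?B = "\<lambda>t. sin t powr (2*lam) * den x t powr (-lam)"
  let ?K = "\<lambda>t. sin t powr (2*lam) * ((1 + x*cos t) * den x t powr (-lam-1))"
  have int_A: "?A integrable_on {0..pi}" and int_B: "?B integrable_on {0..pi}"
    using assms by (auto intro!: integrable_continuous_real continuous_on_mult continuous_on_sin_powr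
        continuous_on_den_powr_at continuous_intros)
  have pointwise: "x * ?A t + 2*lam * ?B t = 2*lam * ?K t" for t
  proof -
    have "den x t powr (-lam) = den x t powr (-lam-1) * den x t"
      by (rule powr_split_last[OF den_pos[OF assms(2)]])
    moreover have "den x t = 1 + 2*x*cos t + x^2" by (simp add: den_def)
    ultimately show ?thesis by algebra
  qed
  have "x * Phi_deriv lam x + 2*lam * Phi lam x = integral {0..pi} (\<lambda>t. x * ?A t + 2*lam * ?B t)"
    unfolding Phi_def Phi_deriv_def
    using integral_add[OF integrable_on_cmult_left[OF int_A, of x] integrable_on_cmult_left[OF int_B, of "2*lam"]]
    by simp
  also have "\<dots> = 2*lam * Psi lam x"
    unfolding pointwise Psi_def by simp
  finally show ?thesis .
qed

lemma Psi_zero: "Psi lam 0 = Phi lam 0"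
  unfolding Psi_def Phi_def den_def by simp

text \<open>By the ODE and the constancy of Psi, the weighted deviation
  g ^ (2 lam) * (Phi lam g - Phi lam 0) has derivative zero on (0, 1).\<close>
lemma Phi_deviation_deriv:
  assumes "0 < lam" "0 < x" "x < 1"
  shows "((\<lambda>x. x powr (2*lam) * (Phi lam x - Phi lam 0)) has_real_derivative 0) (at x)"
proof -
  have xa: "\<bar>x\<bar> < 1" using assms by simp
  have "((\<lambda>x. x powr (2*lam) * (Phi lam x - Phi lam 0)) has_real_derivative
      2*lam * x powr (2*lam - 1) * (Phi lam x - Phi lam 0) + Phi_deriv lam x * x powr (2*lam)) (at x)"
    using assms by (intro DERIV_cong[OF DERIV_mult[OF has_real_derivative_powr
          DERIV_diff[OF Phi_has_derivative[OF assms(1) xa] DERIV_const]]]) auto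
  moreover have "x powr (2*lam) = x powr (2*lam - 1) * x"
    by (rule powr_split_last) (use assms in simp)
  then have "2*lam * x powr (2*lam - 1) * (Phi lam x - Phi lam 0) + Phi_deriv lam x * x powr (2*lam)
      = x powr (2*lam - 1) * (x * Phi_deriv lam x + 2*lam * Phi lam x - 2*lam * Phi lam 0)"
    by (simp add: algebra_simps)
  moreover have "x * Phi_deriv lam x + 2*lam * Phi lam x = 2*lam * Phi lam 0"
    using Phi_ode[OF assms(1) xa] Psi_constant[OF assms(1), of x] Psi_zero assms by simp
  ultimately show ?thesis by simp
qed

text \<open>Central fact: Phi lam g = Phi lam 0 for 0 \<le> g < 1.  The weighted deviation is
  constant on (0, 1) and tends to 0 at 0 from the right, hence vanishes.\<close>
lemma Phi_constant:
  assumes "0 < lam" "0 \<le> g" "g < 1"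
  shows "Phi lam g = Phi lam 0"
proof -
  define M where "M x = x powr (2*lam) * (Phi lam x - Phi lam 0)" for x
  have "\<exists>c. \<forall>x\<in>{0<..<1}. M x = c"
    unfolding M_def using Phi_deviation_deriv[OF assms(1)]
    by (intro has_field_derivative_zero_constant) (auto intro: has_field_derivative_at_within)
  then obtain c where c: "\<And>x. x \<in> {0<..<1} \<Longrightarrow> M x = c" by blast
  have "(M \<longlongrightarrow> c) (at_right 0)"
  proof (rule tendsto_eventually)
    show "eventually (\<lambda>x. M x = c) (at_right 0)"
      using eventually_at_right_real[of 0 "1::real"] by (auto elim!: eventually_mono intro: c)
  qed
  moreover have "(M \<longlongrightarrow> 0 * (Phi lam 0 - Phi lam 0)) (at_right 0)"
  proof -
    have "isCont (Phi lam) 0" using Phi_has_derivative[OF assms(1), of 0] by (intro DERIV_isCont) auto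
    then have "((\<lambda>x. Phi lam x - Phi lam 0) \<longlongrightarrow> Phi lam 0 - Phi lam 0) (at_right 0)"
      by (intro tendsto_intros) (simp add: continuous_at filterlim_at_split)
    moreover have "((\<lambda>x. x powr (2*lam)) \<longlongrightarrow> 0) (at_right (0::real))"
      using assms(1) eventually_at_right_less[of "0::real"]
      by (intro tendsto_zero_powrI[where b = "2*lam"]) (auto elim!: eventually_mono intro!: tendsto_intros)
    ultimately show ?thesis unfolding M_def by (rule tendsto_mult[rotated])
  qed
  ultimately have "c = 0" using tendsto_unique[of "at_right (0::real)"] by force
  show ?thesis
  proof (cases "g = 0")
    case False
    then have "g powr (2*lam) * (Phi lam g - Phi lam 0) = 0"
      using c[of g] \<open>c = 0\<close> assms unfolding M_def by simp
    then show ?thesis using False assms by simp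
  qed simp
qed

lemma continuous_on_den_ratio:
  "continuous_on ({-1<..<1} \<times> T) (\<lambda>q. f (fst q) (snd q) / den (fst q) (snd q) ^ n)"
  if "continuous_on ({-1<..<1} \<times> T) (\<lambda>q. f (fst q) (snd q))"
proof (rule continuous_on_divide)
  show "\<forall>q\<in>{-1<..<(1::real)} \<times> T. den (fst q) (snd q) ^ n \<noteq> 0"
  proof
    fix q assume "q \<in> {-1<..<(1::real)} \<times> T"
    then have "\<bar>fst q\<bar> < 1" by auto
    then show "den (fst q) (snd q) ^ n \<noteq> 0" using den_pos[of "fst q" "snd q"] by simp
  qed
qed (use that in \<open>auto simp: den_def intro!: continuous_intros\<close>)

text \<open>The exact t-derivative behind the vanishing of the next integral: the
  g-derivative of g (g + cos t) / den g t equals the t-derivative of sin t / den g t.\<close>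
lemma sin_over_den_deriv:
  assumes "\<bar>g\<bar> < 1"
  shows "((\<lambda>t. sin t / den g t) has_real_derivative
      ((2*g + cos t) * den g t - g * (g + cos t) * (2*cos t + 2*g)) / den g t ^ 2) (at t)"
proof -
  have d: "0 < den g t" using den_pos[OF assms] .
  have "((\<lambda>t. sin t / den g t) has_real_derivative
      (cos t * den g t - sin t * (-2*g * sin t)) / (den g t * den g t)) (at t)"
    using d by (intro DERIV_divide DERIV_sin den_deriv_angle) simp
  moreover have "sin t ^ 2 + cos t ^ 2 = 1" "den g t = 1 + 2*g*cos t + g^2" by (simp_all add: den_def)
  then have "cos t * den g t - sin t * (-2*g * sin t)
      = (2*g + cos t) * den g t - g * (g + cos t) * (2*cos t + 2*g)" by algebra
  ultimately show ?thesis by (simp add: power2_eq_square)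
qed

text \<open>The integral of g (g + cos t) / den g t vanishes: it is constant in g, its
  g-derivative integrating to zero by the previous lemma.\<close>
lemma cos_ratio_integral_zero:
  assumes "0 \<le> g" "g < 1"
  shows "integral {0..pi} (\<lambda>t. g * (g + cos t) / den g t) = 0"
proof -
  let ?F' = "\<lambda>x t. ((2*x + cos t) * den x t - x * (x + cos t) * (2*cos t + 2*x)) / den x t ^ 2"
  have "integral {0..pi} (\<lambda>t. g * (g + cos t) / den g t) = integral {0..pi} (\<lambda>t. 0 * (0 + cos t) / den 0 t)"
  proof (rule parametric_integral_constant[where U = "{-1<..<1}" and F' = ?F'])
    fix x t :: real assume "x \<in> {-1<..<1}"
    then have "den x t \<noteq> 0" using den_pos[of x t] by (auto simp: abs_less_iff)
    then show "((\<lambda>x. x * (x + cos t) / den x t) has_real_derivative ?F' x t) (at x)"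
      by (auto intro!: derivative_eq_intros den_deriv_param simp: power2_eq_square)
  next
    fix x :: real assume "x \<in> {-1<..<1}"
    then have "\<bar>x\<bar> < 1" by auto
    then have "\<forall>t\<in>{0..pi}. den x t \<noteq> 0" by (metis den_pos less_irrefl)
    then show "(\<lambda>t. x * (x + cos t) / den x t) integrable_on {0..pi}"
      by (auto simp: den_def intro!: integrable_continuous_real continuous_intros)
  next
    have "continuous_on ({-1<..<1} \<times> {0..pi}) (\<lambda>q. ?F' (fst q) (snd q))"
      by (rule continuous_on_den_ratio) (auto simp: den_def intro!: continuous_intros)
    then show "continuous_on ({-1<..<1} \<times> {0..pi}) (\<lambda>(x, t). ?F' x t)"
      by (simp add: split_beta')
  next
    fix x :: real assume "0 < x" "x < g"
    then have xa: "\<bar>x\<bar> < 1" using assms by simp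
    show "integral {0..pi} (?F' x) = 0"
    proof (rule integral_zero_by_antiderivative[OF _ _ _ sin_over_den_deriv[OF xa]])
      have "\<forall>t\<in>{0..pi}. den x t \<noteq> 0" by (metis den_pos[OF xa] less_irrefl)
      then show "continuous_on {0..pi} (\<lambda>t. sin t / den x t)"
        unfolding den_def by (intro continuous_intros) auto
    qed simp_all
  qed (use assms in auto)
  then show ?thesis by simp
qed

text \<open>Jensen-type identity: the integral of ln (1 + 2 g cos t + g^2) over [0, pi] is 0
  for 0 \<le> g < 1; its g-derivative is (2/g) times the previous integral.\<close>
lemma log_den_integral_zero:
  assumes "0 \<le> g" "g < 1"
  shows "integral {0..pi} (\<lambda>t. ln (den g t)) = 0"
proof -
  have "integral {0..pi} (\<lambda>t. ln (den g t)) = integral {0..pi} (\<lambda>t. ln (den 0 t))"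
  proof (rule parametric_integral_constant[where U = "{-1<..<1}"
        and F' = "\<lambda>x t. (2*cos t + 2*x) / den x t"])
    fix x t :: real assume "x \<in> {-1<..<1}"
    then have "0 < den x t" using den_pos[of x t] by auto
    then show "((\<lambda>x. ln (den x t)) has_real_derivative (2*cos t + 2*x) / den x t) (at x)"
      by (auto intro!: derivative_eq_intros den_deriv_param)
  next
    fix x :: real assume "x \<in> {-1<..<1}"
    then have "\<forall>t\<in>{0..pi}. 0 < den x t" using den_pos[of x] by auto
    then show "(\<lambda>t. ln (den x t)) integrable_on {0..pi}"
      by (auto simp: den_def intro!: integrable_continuous_real continuous_intros)
  next
    have "continuous_on ({-1<..<1} \<times> {0..pi}) (\<lambda>q. (2*cos (snd q) + 2*fst q) / den (fst q) (snd q) ^ 1)"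
      by (rule continuous_on_den_ratio) (auto intro!: continuous_intros)
    then show "continuous_on ({-1<..<1} \<times> {0..pi}) (\<lambda>(x, t). (2*cos t + 2*x) / den x t)"
      by (simp add: split_beta')
  next
    fix x :: real assume x: "0 < x" "x < g"
    have "(2/x) * (x * (x + cos t)) = 2*cos t + 2*x" for t
      using x by (simp add: field_simps)
    then have "(\<lambda>t. (2*cos t + 2*x) / den x t) = (\<lambda>t. (2/x) * (x * (x + cos t) / den x t))"
      by (simp only: times_divide_eq_right)
    then have "integral {0..pi} (\<lambda>t. (2*cos t + 2*x) / den x t)
        = (2/x) * integral {0..pi} (\<lambda>t. x * (x + cos t) / den x t)"
      by (simp only: integral_mult_right)
    then show "integral {0..pi} (\<lambda>t. (2*cos t + 2*x) / den x t) = 0"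
      using cos_ratio_integral_zero[of x] x assms by simp
  qed (use assms in auto)
  then show ?thesis by (simp add: den_def)
qed

lemma neg_two_cos_range:
  assumes "0 < t" "t < pi" shows "-2 < -2 * cos t" "-2 * cos t < 2"
proof -
  have "cos t < cos 0" using assms by (intro cos_monotone_0_pi) auto
  moreover have "cos pi < cos t" using assms by (intro cos_monotone_0_pi) auto
  ultimately show "-2 < -2 * cos t" "-2 * cos t < 2" by simp_all
qed

lemma neg_two_cos_limits:
  "((ereal \<circ> (\<lambda>t. -2 * cos t) \<circ> real_of_ereal) \<longlongrightarrow> ereal (-2)) (at_right (ereal 0))"
  "((ereal \<circ> (\<lambda>t. -2 * cos t) \<circ> real_of_ereal) \<longlongrightarrow> ereal 2) (at_left (ereal pi))"
  unfolding ereal_tendsto_simps by (auto intro!: tendsto_eq_intros)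

text \<open>Under the hypotheses of the substitution, the integrand on (-2, 2) is integrable,
  since the absolute value of its pull-back is.\<close>
lemma chebyshev_substitution_integrable:
  fixes f h :: "real \<Rightarrow> real"
  assumes f_meas: "f \<in> borel_measurable borel"
    and f_cont: "\<And>x. -2 < x \<Longrightarrow> x < 2 \<Longrightarrow> isCont f x"
    and h_cont: "continuous_on {0..pi} h"
    and f_h: "\<And>t. 0 < t \<Longrightarrow> t < pi \<Longrightarrow> f (-2 * cos t) * (2 * sin t) = h t"
  shows "set_integrable lborel (einterval (-2) 2) f"
proof -
  have h_int: "set_integrable lborel {0<..<pi} h"
    by (rule set_integrable_subset[OF borel_integrable_atLeastAtMost'[OF h_cont]]) auto
  have abs_h_int: "set_integrable lborel {0<..<pi} (\<lambda>t. \<bar>h t\<bar>)"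
    by (rule set_integrable_abs[OF h_int])
  have "set_integrable lborel (einterval (ereal (-2)) (ereal 2)) (\<lambda>x. \<bar>f x\<bar>)"
  proof (rule interval_integral_substitution_nonneg(1)[of "ereal 0" "ereal pi" "\<lambda>t. -2 * cos t" "\<lambda>t. 2 * sin t"])
    show "set_integrable lborel (einterval (ereal 0) (ereal pi)) (\<lambda>t. \<bar>f (-2 * cos t)\<bar> * (2 * sin t))"
      unfolding einterval_eq_Icc
    proof (subst set_integrable_cong[OF refl refl])
      fix t assume t: "t \<in> {0<..<pi}"
      have "\<bar>f (-2 * cos t)\<bar> * (2 * sin t) = \<bar>f (-2 * cos t) * (2 * sin t)\<bar>"
        using sin_gt_zero[of t] t by (simp add: abs_mult)
      then show "\<bar>f (-2 * cos t)\<bar> * (2 * sin t) = \<bar>h t\<bar>" using f_h[of t] t by simp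
    qed (rule abs_h_int)
  next
    show "isCont (\<lambda>x. \<bar>f x\<bar>) (-2 * cos t)" if "ereal 0 < ereal t" "ereal t < ereal pi" for t
      using that f_cont neg_two_cos_range[of t] by (auto intro!: continuous_intros)
  next
    show "0 \<le> 2 * sin t" if "ereal 0 \<le> ereal t" "ereal t \<le> ereal pi" for t
      using that sin_ge_zero[of t] by simp
  qed (use neg_two_cos_limits in \<open>auto intro!: derivative_eq_intros continuous_intros\<close>)
  then show ?thesis
    using set_integrable_abs_iff'[of f lborel] f_meas by (simp add: zero_ereal_def)
qed

lemma chebyshev_substitution:
  fixes f h :: "real \<Rightarrow> real"
  assumes "f \<in> borel_measurable borel"
    and f_cont: "\<And>x. -2 < x \<Longrightarrow> x < 2 \<Longrightarrow> isCont f x"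
    and h_cont: "continuous_on {0..pi} h"
    and f_h: "\<And>t. 0 < t \<Longrightarrow> t < pi \<Longrightarrow> f (-2 * cos t) * (2 * sin t) = h t"
  shows "(LBINT x = -2..2. f x) = integral {0..pi} h"
proof -
  have h_int: "set_integrable lborel {0..pi} h"
    by (rule borel_integrable_atLeastAtMost'[OF h_cont])
  have "(LBINT x = ereal (-2)..ereal 2. f x)
      = (LBINT t = ereal 0..ereal pi. (2 * sin t) *\<^sub>R f (-2 * cos t))"
  proof (rule interval_integral_substitution_integrable)
    show "set_integrable lborel (einterval (ereal 0) (ereal pi)) (\<lambda>t. (2 * sin t) *\<^sub>R f (-2 * cos t))"
      unfolding einterval_eq_Icc
    proof (subst set_integrable_cong[OF refl refl])
      fix t assume "t \<in> {0<..<pi}"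
      then show "(2 * sin t) *\<^sub>R f (-2 * cos t) = h t" using f_h[of t] by (simp add: mult.commute)
    qed (rule set_integrable_subset[OF h_int]; auto)
  next
    show "isCont f (-2 * cos t)" if "ereal 0 < ereal t" "ereal t < ereal pi" for t
      using that f_cont neg_two_cos_range[of t] by auto
  next
    show "0 \<le> 2 * sin t" if "ereal 0 \<le> ereal t" "ereal t \<le> ereal pi" for t
      using that sin_ge_zero[of t] by simp
  qed (use chebyshev_substitution_integrable[OF assms] neg_two_cos_limits
         in \<open>auto intro!: derivative_eq_intros continuous_intros\<close>)
  also have "\<dots> = (LBINT t = ereal 0..ereal pi. h t)"
    by (rule interval_integral_cong) (use f_h in \<open>auto simp: mult.commute\<close>)
  also have "\<dots> = integral {0..pi} h"
    using interval_integral_eq_integral[of 0 pi h] h_int by simp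
  finally show ?thesis by simp
qed

lemma G_joukowski:
  assumes "2 < z"
  shows "0 < G z" "G z < 1" "z = G z + 1 / G z"
proof -
  define r where "r = sqrt (z^2 - 4)"
  have "2 * 2 \<le> z * z" using assms by (intro mult_mono) auto
  then have "4 \<le> z^2" by (simp add: power2_eq_square)
  then have r_sq: "r^2 = z^2 - 4" unfolding r_def by simp
  have "r < z"
    unfolding r_def using assms by (intro real_less_lsqrt) (auto simp: power2_eq_square)
  moreover have "z - 2 < r"
    unfolding r_def using assms by (intro real_less_rsqrt) (auto simp: power2_eq_square algebra_simps)
  moreover have G_r: "G z = (z - r) / 2" unfolding G_def r_def ..
  ultimately show pos: "0 < G z" and "G z < 1" by simp_all
  have "G z * (z - G z) = 1"
    unfolding G_r using r_sq by (simp add: field_simps power2_eq_square)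
  then show "z = G z + 1 / G z" using pos by (simp add: field_simps)
qed

lemma joukowski_shift:
  assumes "0 < g" "z = g + 1 / g"
  shows "z - (-2 * cos t) = den g t / g"
  using assms unfolding den_def by (simp add: field_simps power2_eq_square)

lemma semicircle_weight:
  assumes "0 < sin t"
  shows "4 - (-2 * cos t)^2 = (2 * sin t)^2"
    and "sqrt (4 - (-2 * cos t)^2) = 2 * sin t"
    and "(4 - (-2 * cos t)^2) powr (lam - 1/2) * (2 * sin t) = 2 powr (2*lam) * sin t powr (2*lam)"
proof -
  show sq: "4 - (-2 * cos t)^2 = (2 * sin t)^2"
    by (simp add: sin_squared_eq algebra_simps)
  show "sqrt (4 - (-2 * cos t)^2) = 2 * sin t" unfolding sq real_sqrt_abs using assms by simp
  have s2: "0 < 2 * sin t" using assms by simp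
  have "(4 - (-2 * cos t)^2) powr (lam - 1/2) * (2 * sin t) = (2 * sin t) powr (2*lam - 1) * (2 * sin t)"
    unfolding sq powr_realpow[OF s2, of 2, symmetric] powr_powr by (simp add: algebra_simps)
  also have "\<dots> = (2 * sin t) powr (2*lam)"
    using powr_split_last[OF s2, of "2*lam"] by simp
  also have "\<dots> = 2 powr (2*lam) * sin t powr (2*lam)"
    using assms by (simp add: powr_mult)
  finally show "(4 - (-2 * cos t)^2) powr (lam - 1/2) * (2 * sin t) = 2 powr (2*lam) * sin t powr (2*lam)" .
qed

lemma semicircle_pos:
  assumes "-2 < (x::real)" "x < 2" shows "0 < 4 - x^2"
proof -
  have "0 < (2 - x) * (2 + x)" using assms by (intro mult_pos_pos) auto
  then show ?thesis by (simp add: power2_eq_square algebra_simps)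
qed

lemma C_eq:
  assumes "0 < lam"
  shows "C lam = 2 powr (2*lam) * Phi lam 0"
proof -
  have "C lam = integral {0..pi} (\<lambda>t. 2 powr (2*lam) * sin t powr (2*lam))"
    unfolding C_def
  proof (rule chebyshev_substitution)
    show "(\<lambda>x. (4 - x^2) powr (lam - 1/2)) \<in> borel_measurable borel" by measurable
    show "isCont (\<lambda>x. (4 - x^2) powr (lam - 1/2)) x" if "-2 < x" "x < 2" for x
      using semicircle_pos[OF that] by (auto intro!: continuous_intros)
    show "continuous_on {0..pi} (\<lambda>t. 2 powr (2*lam) * sin t powr (2*lam))"
      using assms by (intro continuous_on_mult continuous_on_const continuous_on_sin_powr) simp
    show "(4 - (-2 * cos t)^2) powr (lam - 1/2) * (2 * sin t) = 2 powr (2*lam) * sin t powr (2*lam)"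
      if "0 < t" "t < pi" for t
      using semicircle_weight(3)[OF sin_gt_zero[OF that]] .
  qed
  then show ?thesis unfolding Phi_def den_def by simp
qed

lemma power_integrand_substituted:
  assumes g: "0 < g" "g < 1" "z = g + 1/g" and s: "0 < sin t"
  shows "(4 - (-2 * cos t)^2) powr (lam - 1/2) / (z - -2 * cos t) powr lam * (2 * sin t)
      = 2 powr (2*lam) * g powr lam * (sin t powr (2*lam) * den g t powr (-lam))"
proof -
  have d: "0 < den g t" using den_pos g by simp
  have shift: "(z - -2 * cos t) powr lam = den g t powr lam / g powr lam"
    unfolding joukowski_shift[OF g(1,3)] using d g by (intro powr_divide less_imp_le)
  have "(4 - (-2 * cos t)^2) powr (lam - 1/2) / (z - -2 * cos t) powr lam * (2 * sin t)
      = (4 - (-2 * cos t)^2) powr (lam - 1/2) * (2 * sin t) / (z - -2 * cos t) powr lam"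
    by (simp only: times_divide_eq_left)
  also have "\<dots> = 2 powr (2*lam) * sin t powr (2*lam) / (den g t powr lam / g powr lam)"
    unfolding semicircle_weight(3)[OF s] shift ..
  also have "\<dots> = 2 powr (2*lam) * g powr lam * (sin t powr (2*lam) * den g t powr (-lam))"
  proof -
    have "0 < den g t powr lam" "0 < g powr lam" using d g by simp_all
    then show ?thesis unfolding powr_minus_divide by (simp add: field_simps)
  qed
  finally show ?thesis .
qed

lemma power_integral:
  assumes "0 < lam" "2 < z"
  shows "(LBINT x = -2..2. (4 - x^2) powr (lam - 1/2) / (z - x) powr lam)
      = 2 powr (2*lam) * G z powr lam * Phi lam 0"
proof -
  define g where "g = G z"
  have g: "0 < g" "g < 1" "z = g + 1/g" using G_joukowski[OF assms(2)] unfolding g_def by auto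
  let ?h = "\<lambda>t. 2 powr (2*lam) * g powr lam * (sin t powr (2*lam) * den g t powr (-lam))"
  have "(LBINT x = -2..2. (4 - x^2) powr (lam - 1/2) / (z - x) powr lam) = integral {0..pi} ?h"
  proof (rule chebyshev_substitution)
    show "continuous_on {0..pi} ?h"
      using assms g by (intro continuous_on_mult continuous_on_const continuous_on_sin_powr
          continuous_on_den_powr_at) auto
  next
    fix t :: real assume "0 < t" "t < pi"
    then show "(4 - (-2 * cos t)^2) powr (lam - 1/2) / (z - -2 * cos t) powr lam * (2 * sin t) = ?h t"
      using power_integrand_substituted[OF g sin_gt_zero] by simp
  next
    fix x :: real assume x: "-2 < x" "x < 2"
    have "0 < z - x" using x assms by simp
    with semicircle_pos[OF x] show "isCont (\<lambda>x. (4 - x^2) powr (lam - 1/2) / (z - x) powr lam) x"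
      by (auto intro!: continuous_intros)
  qed measurable
  also have "\<dots> = 2 powr (2*lam) * g powr lam * Phi lam g"
    unfolding Phi_def by simp
  also have "\<dots> = 2 powr (2*lam) * g powr lam * Phi lam 0"
    using Phi_constant[OF assms(1), of g] g by simp
  finally show ?thesis unfolding g_def .
qed

lemma integral_sin_squared: "integral {0..pi} (\<lambda>t. sin t ^ 2) = pi / 2"
proof -
  have "((\<lambda>t. sin t ^ 2) has_integral ((pi - sin pi * cos pi) / 2 - (0 - sin 0 * cos 0) / 2)) {0..pi}"
  proof (rule fundamental_theorem_of_calculus)
    fix t :: real
    have "((\<lambda>t. (t - sin t * cos t) / 2) has_real_derivative (1 - (cos t * cos t - sin t * sin t)) / 2) (at t)"
      by (auto intro!: derivative_eq_intros)
    moreover have "(1 - (cos t * cos t - sin t * sin t)) / 2 = sin t ^ 2"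
      using sin_cos_squared_add[of t] by (simp add: power2_eq_square algebra_simps)
    ultimately show "((\<lambda>t. (t - sin t * cos t) / 2) has_vector_derivative sin t ^ 2) (at t within {0..pi})"
      by (simp add: has_real_derivative_iff_has_vector_derivative[symmetric] has_field_derivative_at_within)
  qed simp
  then show ?thesis by (simp add: integral_unique)
qed

lemma stieltjes_integral:
  assumes "2 < z"
  shows "(LBINT x = -2..2. (1 / (z - x)) * (sqrt (4 - x^2) / (2 * pi))) = G z"
proof -
  define g where "g = G z"
  have g: "0 < g" "g < 1" "z = g + 1/g" using G_joukowski[OF assms] unfolding g_def by auto
  let ?h = "\<lambda>t. (2/pi) * g * (sin t powr (2*1) * den g t powr (-1))"
  have "(LBINT x = -2..2. (1 / (z - x)) * (sqrt (4 - x^2) / (2 * pi))) = integral {0..pi} ?h"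
  proof (rule chebyshev_substitution)
    show "continuous_on {0..pi} ?h"
      using g by (intro continuous_on_mult continuous_on_const continuous_on_sin_powr
          continuous_on_den_powr_at) auto
  next
    fix t :: real assume "0 < t" "t < pi"
    then have s: "0 < sin t" by (rule sin_gt_zero)
    have d: "0 < den g t" using den_pos g by simp
    have "sin t powr (2*1) = sin t * sin t" using s by (simp add: powr_realpow power2_eq_square)
    moreover have "den g t powr (-1) = 1 / den g t" using d by (simp add: powr_minus_divide)
    ultimately show "(1 / (z - -2 * cos t)) * (sqrt (4 - (-2 * cos t)^2) / (2 * pi)) * (2 * sin t) = ?h t"
      unfolding semicircle_weight(2)[OF s] joukowski_shift[OF g(1,3)] using d g
      by (simp add: field_simps)
  qed (use assms in \<open>auto intro!: continuous_intros\<close>)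
  also have "\<dots> = (2/pi) * g * Phi 1 g"
    unfolding Phi_def by (simp only: integral_mult_right)
  also have "Phi 1 g = pi / 2"
  proof -
    have "Phi 1 0 = integral {0..pi} (\<lambda>t. sin t ^ 2)"
      unfolding Phi_def den_def by (intro integral_cong) (auto simp: powr_realpow' sin_ge_zero)
    then show ?thesis using Phi_constant[of 1 g] g integral_sin_squared by simp
  qed
  finally show ?thesis unfolding g_def by simp
qed

lemma log_integral:
  assumes "2 < z"
  shows "(LBINT x = -2..2. ln (z - x) / (pi * sqrt (4 - x^2))) = - ln (G z)"
proof -
  define g where "g = G z"
  have g: "0 < g" "g < 1" "z = g + 1/g" using G_joukowski[OF assms] unfolding g_def by auto
  have "\<forall>t\<in>{0..pi}. den g t \<noteq> 0" using g by (metis den_pos abs_of_pos less_irrefl)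
  then have ln_den_cont: "continuous_on {0..pi} (\<lambda>t. ln (den g t))"
    unfolding den_def by (intro continuous_intros) auto
  let ?h = "\<lambda>t. ln (den g t) / pi - ln g / pi"
  have "(LBINT x = -2..2. ln (z - x) / (pi * sqrt (4 - x^2))) = integral {0..pi} ?h"
  proof (rule chebyshev_substitution)
    show "continuous_on {0..pi} ?h"
      by (intro continuous_intros ln_den_cont) auto
  next
    fix t :: real assume "0 < t" "t < pi"
    then have s: "0 < sin t" by (rule sin_gt_zero)
    have d: "0 < den g t" using den_pos g by simp
    have "ln (den g t / g) = ln (den g t) - ln g" using d g by (simp add: ln_div)
    then show "ln (z - -2 * cos t) / (pi * sqrt (4 - (-2 * cos t)^2)) * (2 * sin t) = ?h t"
      unfolding semicircle_weight(2)[OF s] joukowski_shift[OF g(1,3)] using s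
      by (simp add: field_simps)
  next
    fix x :: real assume x: "-2 < x" "x < 2"
    have "0 < z - x" using x assms by simp
    with semicircle_pos[OF x] show "isCont (\<lambda>x. ln (z - x) / (pi * sqrt (4 - x^2))) x"
      by (auto intro!: continuous_intros)
  qed measurable
  also have "\<dots> = integral {0..pi} (\<lambda>t. ln (den g t)) / pi - ln g"
    using ln_den_cont by (subst integral_diff) (auto intro!: integrable_continuous_real continuous_intros)
  finally show ?thesis using log_den_integral_zero g unfolding g_def by simp
qed

theorem mainTheorem1:
  fixes lam z :: real
  assumes "lam > 0" and "z > 2"
  shows "(LBINT x = -2..2. (4 - x^2) powr (lam - 1/2) / (z - x) powr lam) = C lam * (G z) powr lam
       \<and> C lam * (G z) powr lam
           = C lam * (LBINT x = -2..2. (1 / (z - x)) * (sqrt (4 - x^2) / (2 * pi))) powr lam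
       \<and> C lam * (LBINT x = -2..2. (1 / (z - x)) * (sqrt (4 - x^2) / (2 * pi))) powr lam
           = C lam * exp (- lam * (LBINT x = -2..2. ln (z - x) / (pi * sqrt (4 - x^2))))"
proof -
  have "exp (- lam * - ln (G z)) = G z powr lam"
    using G_joukowski(1)[OF assms(2)] by (simp add: powr_def)
  then show ?thesis
    using power_integral[OF assms] C_eq[OF assms(1)] stieltjes_integral[OF assms(2)]
      log_integral[OF assms(2)] by simp
qed

end
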